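(* Let $d>d'\ge1$ and $\varepsilon,\varepsilon',p>0$. Then the measure $m_p$ on $E=\mathbb{R}^d_\varepsilon\cup\mathbb{R}^{d'}_{\varepsilon'}\cup\{a^*\}$ does not have the volume doubling property with respect to $\rho$: there is no constant $C>0$ such that $m_p(B(x;2r))\le C\,m_p(B(x;r))$ for all $x\in E$ and all $r>0$, where $B(x;r)=\{y\in E:\rho(x,y)<r\}$.
   Context: For $k\ge2$, $\mathbb{R}^k_r=\{x\in\mathbb{R}^k:|x|>r\}$; $\mathbb{R}^1_r=(0,\infty)$. The space $E$ is obtained by placing $\mathbb{R}^d$ and $\mathbb{R}^{d'}$ along complementary coordinates of $\mathbb{R}^{d+d'}$ and identifying $\{x\in\mathbb{R}^d:|x|\le\varepsilon\}$ and $\{x\in\mathbb{R}^{d'}:|x|\le\varepsilon'\}$ (the point $0$ if $d'=1$) with a single point $a^*$. $m_p(A)=m^{(d)}(A\cap\mathbb{R}^d)+p\,m^{(d')}(A\cap\mathbb{R}^{d'})$ with Lebesgue measures $m^{(k)}$. $|x|_\rho=|x|-\varepsilon$ on $\mathbb{R}^d_\varepsilon$, $|x|_\rho=|x|-\varepsilon'$ on $\mathbb{R}^{d'}_{\varepsilon'}$ ($|x|_\rho=|x|$ on $(0,\infty)$ if $d'=1$), $|a^*|_\rho=0$; $\rho(x,y)=(|x|_\rho+|y|_\rho)\wedge|x-y|$ with $|x-y|:=\infty$ if one point lies in $\mathbb{R}^d_\varepsilon\cup\{a^*\}$ and the other in $\mathbb{R}^{d'}_{\varepsilon'}\cup\{a^*\}$.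 *)

theory Defs
  imports "HOL-Analysis.Analysis"
begin

text \<open>Points of the space E: a point of R^d (L), a point of R^{d'} (R), or the glued point a*.
  Dimensions d = CARD('n), d' = CARD('m).\<close>
datatype ('n, 'm) gpt = GL "real^'n" | GR "real^'m" | Star

definition ext_region :: "real \<Rightarrow> ('k::finite) set \<Rightarrow> (real^'k) set" where
  "ext_region r (I :: 'k set) =
     (if CARD('k) = 1 then {x. \<forall>i. x $ i > 0} else {x. norm x > r})"

definition gspace :: "real \<Rightarrow> real \<Rightarrow> ('n::finite, 'm::finite) gpt set" where
  "gspace eps eps' =
     GL ` ext_region eps (UNIV :: 'n set) \<union> GR ` ext_region eps' (UNIV :: 'm set) \<union> {Star}"

fun rnorm :: "real \<Rightarrow> real \<Rightarrow> ('n::finite, 'm::finite) gpt \<Rightarrow> real" where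
  "rnorm eps eps' (GL x) = norm x - eps"
| "rnorm eps eps' (GR y) = (if CARD('m) = 1 then norm y else norm y - eps')"
| "rnorm eps eps' Star = 0"

text \<open>The metric rho(x,y) = (|x|_rho + |y|_rho) min |x - y|, with |x - y| = oo across the
  two pieces (and whenever a* is involved, except rho(a*,a*) = 0).\<close>
fun grho :: "real \<Rightarrow> real \<Rightarrow> ('n::finite, 'm::finite) gpt \<Rightarrow> ('n, 'm) gpt \<Rightarrow> real" where
  "grho eps eps' (GL x) (GL y) = min (rnorm eps eps' (GL x :: ('n,'m) gpt) + rnorm eps eps' (GL y :: ('n,'m) gpt)) (norm (x - y))"
| "grho eps eps' (GR x) (GR y) = min (rnorm eps eps' (GR x :: ('n,'m) gpt) + rnorm eps eps' (GR y :: ('n,'m) gpt)) (norm (x - y))"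
| "grho eps eps' a b = rnorm eps eps' a + rnorm eps eps' b"

definition gball :: "real \<Rightarrow> real \<Rightarrow> ('n::finite, 'm::finite) gpt \<Rightarrow> real \<Rightarrow> ('n, 'm) gpt set" where
  "gball eps eps' x r = {y \<in> gspace eps eps'. grho eps eps' x y < r}"

definition mp :: "real \<Rightarrow> ('n::finite, 'm::finite) gpt set \<Rightarrow> ennreal" where
  "mp p A = emeasure lborel (GL -` A) + ennreal p * emeasure lborel (GR -` A)"

end

theory Submission
  imports Defs
begin

text \<open>Far out on the thin arm, at a point of \<open>\<rho>\<close>-radius \<open>t\<close>, the ball of radius \<open>t\<close> stays
  inside \<open>\<real>\<^bsup>d'\<^esup>\<close> and has measure \<open>O(t\<^bsup>d'\<^esup>)\<close>, whereas the ball of radius \<open>2t\<close> passes through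
  \<open>a\<^sup>*\<close> and contains the annulus \<open>\<epsilon> < |z| < \<epsilon> + t\<close> of \<open>\<real>\<^bsup>d\<^esup>\<close>, of measure \<open>\<ge> c t\<^bsup>d\<^esup>\<close>.
  Since \<open>d > d'\<close>, no doubling constant can bound the ratio.\<close>

lemma eventually_power_less_power:
  fixes A B :: real
  assumes "d' < d" and "A > 0"
  shows "eventually (\<lambda>t. B * t ^ d' < A * t ^ d) at_top"
proof (rule eventually_at_top_linorder[THEN iffD2], intro exI allI impI)
  fix t :: real
  assume t: "max 1 (\<bar>B\<bar> / A + 1) \<le> t"
  then have "0 < t" by simp
  have "t \<le> t ^ (d - d')"
    using power_increasing[of 1 "d - d'" t] assms(1) t by simp
  then have "t * t ^ d' \<le> t ^ d"
    using assms(1) t mult_right_mono[of t "t ^ (d - d')" "t ^ d'"]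
    by (simp add: power_add[symmetric])
  have "B * t ^ d' \<le> \<bar>B\<bar> * t ^ d'"
    using t by (intro mult_right_mono) auto
  also have "\<dots> < (A * t) * t ^ d'"
    using t \<open>0 < t\<close> assms(2) by (intro mult_strict_right_mono) (auto simp: field_simps)
  also have "\<dots> \<le> A * t ^ d"
    using \<open>t * t ^ d' \<le> t ^ d\<close> assms(2) by (simp add: mult.assoc)
  finally show "B * t ^ d' < A * t ^ d" .
qed

lemma emeasure_annulus_ge:
  fixes r w :: real
  assumes "r \<ge> 0" and "w \<ge> 0"
  shows "ennreal (unit_ball_vol DIM('a) * (w / 2) ^ DIM('a))
           \<le> emeasure lborel {z :: 'a :: euclidean_space. r < norm z \<and> norm z < r + w}"
proof -
  obtain b :: 'a where b: "b \<in> Basis"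
    using nonempty_Basis by blast
  define c where "c = (r + w / 2) *\<^sub>R b"
  have norm_c: "norm c = r + w / 2"
    using assms b by (simp add: c_def)
  have "ball c (w / 2) \<subseteq> {z. r < norm z \<and> norm z < r + w}"
  proof
    fix z assume "z \<in> ball c (w / 2)"
    then have "norm (z - c) < w / 2"
      by (simp add: dist_norm norm_minus_commute)
    then show "z \<in> {z. r < norm z \<and> norm z < r + w}"
      using norm_triangle_ineq2[of z c] norm_triangle_ineq3[of c z] norm_c
      by (simp add: norm_minus_commute)
  qed
  moreover have "{z :: 'a. r < norm z \<and> norm z < r + w} \<in> sets lborel"
  proof -
    have "{z :: 'a. r < norm z \<and> norm z < r + w} = ball 0 (r + w) - cball 0 r"
      by auto
    then show ?thesis by simp
  qed
  ultimately have "emeasure lborel (ball c (w / 2))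
      \<le> emeasure lborel {z :: 'a. r < norm z \<and> norm z < r + w}"
    by (rule emeasure_mono)
  then show ?thesis
    using assms(2) by (simp add: emeasure_ball)
qed

lemma GL_in_gspace_iff:
  assumes "CARD('n::finite) \<noteq> 1"
  shows "(GL z :: ('n, 'm::finite) gpt) \<in> gspace eps eps' \<longleftrightarrow> eps < norm z"
  using assms by (auto simp: gspace_def ext_region_def)

lemma rnorm_GR_nonneg:
  assumes "(GR z :: ('n::finite, 'm::finite) gpt) \<in> gspace eps eps'"
  shows "0 \<le> rnorm eps eps' (GR z :: ('n, 'm) gpt)"
  using assms by (auto simp: gspace_def ext_region_def)

lemma GL_vimage_gball_GR:
  assumes "CARD('n::finite) \<noteq> 1"
  shows "GL -` gball eps eps' (GR y :: ('n, 'm::finite) gpt) s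
           = {z. eps < norm z \<and> norm z < eps + (s - rnorm eps eps' (GR y :: ('n, 'm) gpt))}"
  using assms by (auto simp: gball_def GL_in_gspace_iff)

lemma GR_vimage_gball_GR_subset:
  assumes "r \<le> rnorm eps eps' (GR y :: ('n::finite, 'm::finite) gpt)"
  shows "GR -` gball eps eps' (GR y :: ('n, 'm) gpt) r \<subseteq> ball y r"
proof
  fix z assume z: "z \<in> GR -` gball eps eps' (GR y :: ('n, 'm) gpt) r"
  then have "0 \<le> rnorm eps eps' (GR z :: ('n, 'm) gpt)"
    by (intro rnorm_GR_nonneg) (simp add: gball_def)
  with z assms show "z \<in> ball y r"
    by (auto simp: gball_def dist_norm)
qed

lemma mp_gball_GR_le:
  assumes "CARD('n::finite) \<noteq> 1" and "p \<ge> 0" and "0 \<le> r"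
    and "r \<le> rnorm eps eps' (GR y :: ('n, 'm::finite) gpt)"
  shows "mp p (gball eps eps' (GR y :: ('n, 'm) gpt) r)
           \<le> ennreal (p * (unit_ball_vol CARD('m) * r ^ CARD('m)))"
proof -
  have "GL -` gball eps eps' (GR y :: ('n, 'm) gpt) r = {}"
    using assms(1,4) by (auto simp: GL_vimage_gball_GR)
  then have "mp p (gball eps eps' (GR y :: ('n, 'm) gpt) r) \<le> ennreal p * emeasure lborel (ball y r)"
    unfolding mp_def using GR_vimage_gball_GR_subset[OF assms(4)]
    by (simp add: emeasure_mono mult_left_mono)
  also have "\<dots> = ennreal (p * (unit_ball_vol CARD('m) * r ^ CARD('m)))"
    using assms(2,3) by (simp add: emeasure_ball ennreal_mult)
  finally show ?thesis .
qed

lemma mp_gball_GR_ge: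
  assumes "CARD('n::finite) \<noteq> 1" and "eps \<ge> 0"
    and "rnorm eps eps' (GR y :: ('n, 'm::finite) gpt) \<le> s"
  shows "ennreal (unit_ball_vol CARD('n) * ((s - rnorm eps eps' (GR y :: ('n, 'm) gpt)) / 2) ^ CARD('n))
           \<le> mp p (gball eps eps' (GR y :: ('n, 'm) gpt) s)"
proof -
  let ?w = "s - rnorm eps eps' (GR y :: ('n, 'm) gpt)"
  have "ennreal (unit_ball_vol CARD('n) * (?w / 2) ^ CARD('n))
          \<le> emeasure lborel (GL -` gball eps eps' (GR y :: ('n, 'm) gpt) s)"
    using emeasure_annulus_ge[where 'a = "real^'n", of eps ?w] assms
    by (simp add: GL_vimage_gball_GR)
  also have "\<dots> \<le> mp p (gball eps eps' (GR y :: ('n, 'm) gpt) s)"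
    by (simp add: mp_def)
  finally show ?thesis .
qed

lemma exists_GR_rnorm_ge:
  "\<exists>y. (GR y :: ('n::finite, 'm::finite) gpt) \<in> gspace eps eps' \<and> T \<le> rnorm eps eps' (GR y :: ('n, 'm) gpt)"
proof -
  define a where "a = \<bar>T\<bar> + \<bar>eps'\<bar> + 1"
  define y :: "real^'m" where "y = (\<chi> i. a)"
  have "a \<le> norm y"
    using component_le_norm_cart[of y] by (simp add: y_def a_def)
  then have "(GR y :: ('n, 'm) gpt) \<in> gspace eps eps' \<and> T \<le> rnorm eps eps' (GR y :: ('n, 'm) gpt)"
    by (auto simp: gspace_def ext_region_def y_def a_def)
  then show ?thesis ..
qed

theorem proposition2p3:
  fixes eps eps' p :: real
  assumes "CARD('n::finite) > CARD('m::finite)"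
    and "eps > 0" and "eps' > 0" and "p > 0"
  shows "\<not> (\<exists>C::real. C > 0 \<and>
            (\<forall>x \<in> (gspace eps eps' :: ('n, 'm) gpt set). \<forall>r > 0.
               mp p (gball eps eps' x (2 * r)) \<le> ennreal C * mp p (gball eps eps' x r)))"
proof
  assume "\<exists>C::real. C > 0 \<and>
            (\<forall>x \<in> (gspace eps eps' :: ('n, 'm) gpt set). \<forall>r > 0.
               mp p (gball eps eps' x (2 * r)) \<le> ennreal C * mp p (gball eps eps' x r))"
  then obtain C where "C > 0" and doubling: "\<forall>x \<in> (gspace eps eps' :: ('n, 'm) gpt set). \<forall>r > 0.
               mp p (gball eps eps' x (2 * r)) \<le> ennreal C * mp p (gball eps eps' x r)" by blast
  have card_n: "CARD('n) \<noteq> 1"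
    using assms(1) zero_less_card_finite[where 'a = 'm] by linarith
  define A where "A = unit_ball_vol CARD('n) / 2 ^ CARD('n)"
  define B where "B = C * (p * unit_ball_vol CARD('m))"
  obtain T where T: "\<And>t. T \<le> t \<Longrightarrow> B * t ^ CARD('m) < A * t ^ CARD('n)"
    using eventually_power_less_power[OF assms(1), of A B] by (auto simp: A_def eventually_at_top_linorder)
  obtain y where y: "(GR y :: ('n, 'm) gpt) \<in> gspace eps eps'"
    and far: "max T 1 \<le> rnorm eps eps' (GR y :: ('n, 'm) gpt)"
    using exists_GR_rnorm_ge by blast
  let ?x = "GR y :: ('n, 'm) gpt"
  define t where "t = rnorm eps eps' ?x"
  have t: "max T 1 \<le> t"
    using far by (simp only: t_def)
  have "ennreal (A * t ^ CARD('n)) \<le> mp p (gball eps eps' ?x (2 * t))"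
    using mp_gball_GR_ge[OF card_n, of eps eps' y "2 * t" p, folded t_def] assms(2) t
    by (simp add: A_def power_divide)
  also have "\<dots> \<le> ennreal C * mp p (gball eps eps' ?x t)"
    using doubling y t by auto
  also have "\<dots> \<le> ennreal C * ennreal (p * (unit_ball_vol CARD('m) * t ^ CARD('m)))"
    using mp_gball_GR_le[OF card_n, of p t eps eps' y, folded t_def] assms(4) t
    by (simp add: mult_left_mono)
  also have "\<dots> = ennreal (B * t ^ CARD('m))"
    using \<open>C > 0\<close> assms(4) t by (simp add: B_def ennreal_mult mult.assoc)
  finally have "A * t ^ CARD('n) \<le> B * t ^ CARD('m)"
    using \<open>C > 0\<close> assms(4) t by (subst (asm) ennreal_le_iff) (auto simp: B_def)
  with T[of t] t show False
    by linarith
qed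

end
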